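(* Let $a\in\mathrm{Ext}_{\mathcal A(1)}(\mathbb M_2,\mathbb M_2)$ be the class detected in the $\rho$-Bockstein spectral sequence by $\tau^2v_0$. Then $a\,\eta=\rho\,\eta_0^2$ in $\mathrm{Ext}_{\mathcal A(1)}(\mathbb M_2,\mathbb M_2)$.
   Context: $\mathbb M_2=\mathbb F_2[\tau,\rho]$; $\mathcal A(1)=\big(\mathbb M_2,\mathbb M_2[\xi_1,\tau_0,\tau_1]/(\xi_1^2,\ \tau_0^2-\rho\tau_1-\rho\tau_0\xi_1-\tau\xi_1,\ \tau_1^2)\big)$ with $\eta_R(\tau)=\tau+\rho\tau_0$, $\eta_R(\rho)=\rho$. The $\rho$-Bockstein spectral sequence has $E_1=\mathbb F_2[\rho,\tau,v_0,\eta,x,v_1^4]/(v_0\eta,\tau\eta^3,\eta x,x^2-v_0^2v_1^4)$, $v_0=[\tau_0]$, $\eta=[\xi_1]$, $d_1(\tau)=\rho v_0$, $d_2(\tau^2)=\rho^2\eta_0$, where $\eta_0=[\tau_0^2]$ is the permanent cycle detected by $\tau\eta$. The element $\tau^2v_0$ is a permanent cycle (cobar representative $\tau^2\tau_0+\tau\rho\tau_0^2+\rho^2\tau_0^3$). *)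

theory Defs
  imports "HOL-Library.Poly_Mapping" "HOL-Library.Z2"
begin

text \<open>Concrete model of the cobar complex of the Hopf algebroid A(1) over M2 = F2[tau,rho].
  Polynomials over F2 in variables numbered by nat:
    0 = tau, 1 = rho, 2 = xi1, 3 = tau0, 4 = tau1   (first tensor factor / Gamma)
    5 = xi1', 6 = tau0', 7 = tau1'                   (second tensor factor).\<close>

type_synonym F2poly = "(nat \<Rightarrow>\<^sub>0 nat) \<Rightarrow>\<^sub>0 bit"

definition X :: "nat \<Rightarrow> F2poly" where
  "X i = Poly_Mapping.single (Poly_Mapping.single i 1) 1"

definition subst :: "(nat \<Rightarrow> F2poly) \<Rightarrow> F2poly \<Rightarrow> F2poly" where
  "subst \<sigma> p = (\<Sum>m\<in>Poly_Mapping.keys p. Poly_Mapping.single 0 (Poly_Mapping.lookup p m) *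
                    (\<Prod>v\<in>Poly_Mapping.keys m. \<sigma> v ^ Poly_Mapping.lookup m v))"

definition in_vars :: "nat \<Rightarrow> F2poly \<Rightarrow> bool" where
  "in_vars n p \<longleftrightarrow> (\<forall>m\<in>Poly_Mapping.keys p. Poly_Mapping.keys m \<subseteq> {..<n})"

definition cong_mod :: "nat \<Rightarrow> F2poly list \<Rightarrow> F2poly \<Rightarrow> F2poly \<Rightarrow> bool" where
  "cong_mod n gs p q \<longleftrightarrow> (\<exists>cs. length cs = length gs \<and> (\<forall>c\<in>set cs. in_vars n c) \<and>
      p - q = sum_list (map2 (*) cs gs))"

abbreviation "tau \<equiv> X 0"
abbreviation "rho \<equiv> X 1"
abbreviation "xi1 \<equiv> X 2"
abbreviation "tau0 \<equiv> X 3"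
abbreviation "tau1 \<equiv> X 4"

text \<open>Defining relations of Gamma = M2[xi1,tau0,tau1]/(...).\<close>
definition rels1 :: "F2poly list" where
  "rels1 = [xi1 ^ 2, tau0 ^ 2 - rho * tau1 - rho * tau0 * xi1 - tau * xi1, tau1 ^ 2]"

text \<open>x \<mapsto> 1 \<otimes> x : the second tensor factor; its M2-coefficients are identified with
  the right unit of the first factor, eta_R(tau) = tau + rho tau0, eta_R(rho) = rho.\<close>
definition into2 :: "F2poly \<Rightarrow> F2poly" where
  "into2 = subst (\<lambda>i. if i = 0 then tau + rho * tau0 else if i = 1 then rho
                     else if i = 2 then X 5 else if i = 3 then X 6 else if i = 4 then X 7 else X i)"

text \<open>Relations presenting Gamma \<otimes>_M2 Gamma as a quotient of F2[vars 0..7].\<close>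
definition rels2 :: "F2poly list" where
  "rels2 = rels1 @ map into2 rels1"

text \<open>Coproduct: psi(xi1) = xi1\<otimes>1 + 1\<otimes>xi1, psi(tau0) = tau0\<otimes>1 + 1\<otimes>tau0,
  psi(tau1) = tau1\<otimes>1 + xi1\<otimes>tau0 + 1\<otimes>tau1, psi = id on M2 (left unit).\<close>
definition psi :: "F2poly \<Rightarrow> F2poly" where
  "psi = subst (\<lambda>i. if i = 2 then xi1 + X 5 else if i = 3 then tau0 + X 6
                    else if i = 4 then tau1 + xi1 * X 6 + X 7 else X i)"

text \<open>Cobar differential C^1 = Gamma \<rightarrow> C^2 = Gamma \<otimes> Gamma (characteristic 2, no signs).\<close>
definition cobar_d1 :: "F2poly \<Rightarrow> F2poly" where
  "cobar_d1 z = into2 z - psi z + z"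

text \<open>Product of 1-cochains [x]\<cdot>[y] = [x | y] in the cobar complex.\<close>
definition cobar_prod :: "F2poly \<Rightarrow> F2poly \<Rightarrow> F2poly" where
  "cobar_prod x y = x * into2 y"

text \<open>Two 2-cocycles represent the same element of Ext^2_{A(1)}(M2,M2)
  iff their difference is a coboundary.\<close>
definition ext2_eq :: "F2poly \<Rightarrow> F2poly \<Rightarrow> bool" where
  "ext2_eq u v \<longleftrightarrow> (\<exists>z. in_vars 5 z \<and> cong_mod 8 rels2 (u - v) (cobar_d1 z))"

text \<open>Cobar representatives: a (detected by tau^2 v0), eta = [xi1], eta0 = [tau0^2].\<close>
definition a_rep :: F2poly where
  "a_rep = tau ^ 2 * tau0 + tau * rho * tau0 ^ 2 + rho ^ 2 * tau0 ^ 3"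
definition eta_rep :: F2poly where "eta_rep = xi1"
definition eta0_rep :: F2poly where "eta0_rep = tau0 ^ 2"

end

theory Submission
  imports Defs
begin

(* The relation  a * eta = rho * eta0^2  in Ext^2 is witnessed by an explicit null-homotopy:
   for the 1-cochain  z = tau^2 tau1 + tau^2 xi1 tau0  one has, in the cobar complex,
     [a | xi1] - rho [tau0^2 | tau0^2] - d(z)
       = c * R(tau, rho, xi1, tau0, tau1) + c' * R(eta_R tau, rho, xi1', tau0', tau1'),
   where  R(t, r, x, a, b) = a^2 - r b - r a x - t x  is the defining relation of tau0^2 and
   c, c' are explicit polynomials.  Only this one relation (in each tensor factor) is needed. *)

definition mon :: "(nat \<Rightarrow> F2poly) \<Rightarrow> (nat \<Rightarrow>\<^sub>0 nat) \<Rightarrow> F2poly" where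
  "mon \<sigma> m = (\<Prod>v\<in>Poly_Mapping.keys m. \<sigma> v ^ Poly_Mapping.lookup m v)"

lemma mon_superset:
  assumes "finite S" "Poly_Mapping.keys m \<subseteq> S"
  shows "mon \<sigma> m = (\<Prod>v\<in>S. \<sigma> v ^ Poly_Mapping.lookup m v)"
  unfolding mon_def
  by (rule prod.mono_neutral_left) (use assms in \<open>auto simp: in_keys_iff\<close>)

lemma mon_add: "mon \<sigma> (m + m') = mon \<sigma> m * mon \<sigma> m'"
proof -
  let ?S = "Poly_Mapping.keys m \<union> Poly_Mapping.keys m'"
  have fin: "finite ?S" by simp
  have "mon \<sigma> (m + m') = (\<Prod>v\<in>?S. \<sigma> v ^ Poly_Mapping.lookup (m + m') v)"
    by (rule mon_superset[OF fin]) (rule keys_add)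
  also have "\<dots> = (\<Prod>v\<in>?S. \<sigma> v ^ Poly_Mapping.lookup m v * \<sigma> v ^ Poly_Mapping.lookup m' v)"
    by (simp add: lookup_add power_add)
  also have "\<dots> = mon \<sigma> m * mon \<sigma> m'"
    by (simp add: prod.distrib mon_superset[OF fin])
  finally show ?thesis .
qed

lemma subst_mon:
  "subst \<sigma> p = (\<Sum>m\<in>Poly_Mapping.keys p. Poly_Mapping.single 0 (Poly_Mapping.lookup p m) * mon \<sigma> m)"
  by (simp add: subst_def mon_def)

lemma subst_superset:
  assumes "finite S" "Poly_Mapping.keys p \<subseteq> S"
  shows "subst \<sigma> p = (\<Sum>m\<in>S. Poly_Mapping.single 0 (Poly_Mapping.lookup p m) * mon \<sigma> m)"
  unfolding subst_mon
  by (rule sum.mono_neutral_left) (use assms in \<open>auto simp: in_keys_iff\<close>)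

lemma subst_add: "subst \<sigma> (p + q) = subst \<sigma> p + subst \<sigma> q"
proof -
  let ?S = "Poly_Mapping.keys p \<union> Poly_Mapping.keys q"
  have fin: "finite ?S" by simp
  have "subst \<sigma> (p + q) = (\<Sum>m\<in>?S. Poly_Mapping.single 0 (Poly_Mapping.lookup (p + q) m) * mon \<sigma> m)"
    by (rule subst_superset[OF fin]) (rule keys_add)
  also have "\<dots> = subst \<sigma> p + subst \<sigma> q"
    by (simp only: lookup_add single_add distrib_right sum.distrib
        subst_superset[OF fin, symmetric] Un_upper1 Un_upper2)
  finally show ?thesis .
qed

lemma subst_zero: "subst \<sigma> 0 = 0"
  by (simp add: subst_def)

lemma subst_sum: "subst \<sigma> (sum f A) = (\<Sum>a\<in>A. subst \<sigma> (f a))"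
  by (induction A rule: infinite_finite_induct) (auto simp: subst_zero subst_add)

lemma subst_single: "subst \<sigma> (Poly_Mapping.single m c) = Poly_Mapping.single 0 c * mon \<sigma> m"
  by (cases "c = 0") (simp_all add: subst_mon)

lemma poly_sum_of_terms:
  "p = (\<Sum>m\<in>Poly_Mapping.keys p. Poly_Mapping.single m (Poly_Mapping.lookup p m))"
  by (rule poly_mapping_eqI) (auto simp: lookup_sum lookup_single when_def in_keys_iff)

lemma subst_mult: "subst \<sigma> (p * q) = subst \<sigma> p * subst \<sigma> q"
proof -
  let ?P = "Poly_Mapping.keys p" and ?Q = "Poly_Mapping.keys q"
  have "p * q = (\<Sum>m\<in>?P. Poly_Mapping.single m (Poly_Mapping.lookup p m))
              * (\<Sum>m'\<in>?Q. Poly_Mapping.single m' (Poly_Mapping.lookup q m'))"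
    by (rule arg_cong2[where f = "(*)"]) (rule poly_sum_of_terms)+
  also have "\<dots> = (\<Sum>m\<in>?P. \<Sum>m'\<in>?Q.
      Poly_Mapping.single (m + m') (Poly_Mapping.lookup p m * Poly_Mapping.lookup q m'))"
    by (simp add: sum_product mult_single)
  finally have pq: "p * q = \<dots>" .
  have "subst \<sigma> (p * q) = (\<Sum>m\<in>?P. \<Sum>m'\<in>?Q.
      (Poly_Mapping.single 0 (Poly_Mapping.lookup p m) * mon \<sigma> m)
    * (Poly_Mapping.single 0 (Poly_Mapping.lookup q m') * mon \<sigma> m'))"
    unfolding pq subst_sum subst_single
    by (intro sum.cong refl)
       (simp add: mon_add mult_single[of 0 _ 0, simplified, symmetric] ac_simps)
  also have "\<dots> = subst \<sigma> p * subst \<sigma> q"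
    by (simp add: subst_mon sum_product)
  finally show ?thesis .
qed

lemma subst_uminus: "subst \<sigma> (- p) = - subst \<sigma> p"
  using subst_add[of \<sigma> "- p" p] by (simp add: subst_zero eq_neg_iff_add_eq_0)

lemma subst_diff: "subst \<sigma> (p - q) = subst \<sigma> p - subst \<sigma> q"
  using subst_add[of \<sigma> p "- q"] by (simp add: subst_uminus)

lemma subst_one: "subst \<sigma> 1 = 1"
  by (simp add: subst_def)

lemma subst_power: "subst \<sigma> (p ^ n) = subst \<sigma> p ^ n"
  by (induction n) (simp_all add: subst_one subst_mult)

lemma subst_X: "subst \<sigma> (X i) = \<sigma> i"
  by (simp add: X_def subst_single mon_def)

lemmas subst_hom = subst_add subst_mult subst_diff subst_power subst_X

lemma in_vars_X: "i < n \<Longrightarrow> in_vars n (X i)"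
  unfolding in_vars_def X_def by simp

lemma in_vars_add: "in_vars n p \<Longrightarrow> in_vars n q \<Longrightarrow> in_vars n (p + q)"
  unfolding in_vars_def using keys_add[of p q] by blast

lemma in_vars_mult:
  assumes p: "in_vars n p" and q: "in_vars n q"
  shows "in_vars n (p * q)"
  unfolding in_vars_def
proof
  fix m assume "m \<in> Poly_Mapping.keys (p * q)"
  then obtain m1 m2 where m: "m = m1 + m2" "m1 \<in> Poly_Mapping.keys p" "m2 \<in> Poly_Mapping.keys q"
    using keys_mult[of p q] by blast
  have "Poly_Mapping.keys m1 \<subseteq> {..<n}" "Poly_Mapping.keys m2 \<subseteq> {..<n}"
    using p q m(2,3) unfolding in_vars_def by blast+
  then show "Poly_Mapping.keys m \<subseteq> {..<n}"
    using keys_add[of m1 m2] unfolding m(1) by blast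
qed

lemma in_vars_one: "in_vars n 1"
  unfolding in_vars_def by simp

lemma in_vars_power: "in_vars n p \<Longrightarrow> in_vars n (p ^ k)"
  by (induction k) (simp_all only: power_0 power_Suc in_vars_one in_vars_mult)

lemmas in_vars_intros = in_vars_X in_vars_add in_vars_mult in_vars_power

lemma char2_add_self:
  fixes y :: "'a::comm_ring_1"
  assumes "(2::'a) = 0"
  shows "y + y = 0"
  by (metis assms mult_2 mult_zero_left)

lemma char2_add_self_left:
  fixes y z :: "'a::comm_ring_1"
  assumes "(2::'a) = 0"
  shows "y + (y + z) = z"
  by (simp add: add.assoc[symmetric] char2_add_self[OF assms])

lemma char2_uminus:
  fixes y :: "'a::comm_ring_1"
  assumes "(2::'a) = 0"
  shows "- y = y"
  using char2_add_self[OF assms, of y] by (simp add: add_eq_0_iff)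

lemma F2poly_two_eq_zero: "(2::F2poly) = 0"
proof -
  have "(2::F2poly) = Poly_Mapping.single 0 (2::bit)"
    by (rule single_numeral[symmetric])
  also have "\<dots> = 0"
    by (simp only: bit_2_eq_0 single_zero)
  finally show ?thesis .
qed

lemma into2_hom:
  "into2 (p + q) = into2 p + into2 q" "into2 (p * q) = into2 p * into2 q"
  "into2 (p - q) = into2 p - into2 q" "into2 (p ^ n) = into2 p ^ n"
  by (simp_all add: into2_def subst_hom)

lemma into2_X:
  "into2 tau = tau + rho * tau0" "into2 rho = rho" "into2 xi1 = X 5"
  "into2 tau0 = X 6" "into2 tau1 = X 7"
  by (simp_all add: into2_def subst_X)

lemma psi_hom:
  "psi (p + q) = psi p + psi q" "psi (p * q) = psi p * psi q" "psi (p ^ n) = psi p ^ n"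
  by (simp_all add: psi_def subst_hom)

lemma psi_X:
  "psi tau = tau" "psi xi1 = xi1 + X 5" "psi tau0 = tau0 + X 6" "psi tau1 = tau1 + xi1 * X 6 + X 7"
  by (simp_all add: psi_def subst_X)

definition tau0_rel :: "'a::comm_ring_1 \<Rightarrow> 'a \<Rightarrow> 'a \<Rightarrow> 'a \<Rightarrow> 'a \<Rightarrow> 'a" where
  "tau0_rel t r x a b = a ^ 2 - r * b - r * a * x - t * x"

lemma rels1_tau0_rel: "rels1 ! 1 = tau0_rel tau rho xi1 tau0 tau1"
  by (simp add: rels1_def tau0_rel_def)

lemma into2_tau0_rel:
  "into2 (tau0_rel tau rho xi1 tau0 tau1) = tau0_rel (tau + rho * tau0) rho (X 5) (X 6) (X 7)"
  unfolding tau0_rel_def into2_hom into2_X ..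

text \<open>The polynomial identity behind the theorem, valid in any commutative ring of
  characteristic 2.  Reading t, r, x, a, b as tau, rho, xi1, tau0, tau1 and the primed letters
  as the second tensor factor, the left side is  [a|xi1] - rho [tau0^2|tau0^2] - d(z)  with the
  coboundary of z = tau^2 tau1 + tau^2 xi1 tau0 written out.\<close>
lemma char2_null_homotopy_identity:
  fixes t r x a b x' a' b' :: "'a::comm_ring_1"
  assumes char2: "(2::'a) = 0"
  shows "(t^2 * a + t * r * a^2 + r^2 * a^3) * x' - r * (a^2 * a'^2)
       - ((t + r * a)^2 * (b' + x' * a') - t^2 * ((b + x * a' + b') + (x + x') * (a + a'))
          + t^2 * (b + x * a))
     = (r * a'^2 + r^2 * b' + r^2 * x' * a' + r^2 * a * x' + t * r * x') * tau0_rel t r x a b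
       + (r^2 * b + r^2 * x * a + t * r * x) * tau0_rel (t + r * a) r x' a' b'"
  unfolding tau0_rel_def diff_conv_add_uminus char2_uminus[OF char2]
  by (simp add: algebra_simps power2_eq_square power3_eq_cube
      char2_add_self[OF char2] char2_add_self_left[OF char2])

definition null_homotopy :: F2poly where
  "null_homotopy = tau ^ 2 * tau1 + tau ^ 2 * xi1 * tau0"

lemma null_homotopy_in_vars: "in_vars 5 null_homotopy"
  unfolding null_homotopy_def by (intro in_vars_intros) simp_all

lemma cobar_d1_null_homotopy:
  "cobar_d1 null_homotopy =
     (tau + rho * tau0)^2 * (X 7 + X 5 * X 6)
     - tau^2 * ((tau1 + xi1 * X 6 + X 7) + (xi1 + X 5) * (tau0 + X 6))
     + tau^2 * (tau1 + xi1 * tau0)"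
  unfolding cobar_d1_def null_homotopy_def into2_hom into2_X psi_hom psi_X
  by (simp add: algebra_simps)

lemma ext2_eq_by_tau0_rel:
  assumes "in_vars 5 z" "in_vars 8 c" "in_vars 8 c'"
    and "u - v - cobar_d1 z = c * tau0_rel tau rho xi1 tau0 tau1
                          + c' * tau0_rel (tau + rho * tau0) rho (X 5) (X 6) (X 7)"
  shows "ext2_eq u v"
proof -
  let ?cs = "[0, c, 0, 0, c', 0]"
  have "u - v - cobar_d1 z = sum_list (map2 (*) ?cs rels2)"
    using assms(4) rels1_tau0_rel into2_tau0_rel
    by (simp add: rels2_def rels1_def)
  moreover have "length ?cs = length rels2" "\<forall>p\<in>set ?cs. in_vars 8 p"
    using assms(2,3) by (auto simp: rels2_def rels1_def in_vars_def)
  ultimately show ?thesis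
    using assms(1) unfolding ext2_eq_def cong_mod_def by blast
qed

theorem mainTheorem12:
  shows "ext2_eq (cobar_prod a_rep eta_rep) (rho * cobar_prod eta0_rep eta0_rep)"
proof (rule ext2_eq_by_tau0_rel)
  show "in_vars 5 null_homotopy"
    by (rule null_homotopy_in_vars)
  show "in_vars 8 (rho * X 6 ^ 2 + rho ^ 2 * X 7 + rho ^ 2 * X 5 * X 6
                   + rho ^ 2 * tau0 * X 5 + tau * rho * X 5)"
    by (intro in_vars_intros) simp_all
  show "in_vars 8 (rho ^ 2 * tau1 + rho ^ 2 * xi1 * tau0 + tau * rho * xi1)"
    by (intro in_vars_intros) simp_all
  show "cobar_prod a_rep eta_rep - rho * cobar_prod eta0_rep eta0_rep - cobar_d1 null_homotopy
      = (rho * X 6 ^ 2 + rho ^ 2 * X 7 + rho ^ 2 * X 5 * X 6 + rho ^ 2 * tau0 * X 5 + tau * rho * X 5)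
          * tau0_rel tau rho xi1 tau0 tau1
        + (rho ^ 2 * tau1 + rho ^ 2 * xi1 * tau0 + tau * rho * xi1)
          * tau0_rel (tau + rho * tau0) rho (X 5) (X 6) (X 7)"
    unfolding cobar_d1_null_homotopy cobar_prod_def a_rep_def eta_rep_def eta0_rep_def
      into2_hom into2_X
    by (rule char2_null_homotopy_identity[OF F2poly_two_eq_zero])
qed

end
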